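(* Let $X$ be a compact Hausdorff space and $A\subset X$ a nonempty finite subset. Then $\pi_n^M(X,A)=0$ for all $n>0$.
   Context: A continuous multivalued map $X\to Y$ is a subset $T\subset X\times Y$ such that the restriction of the projection $X\times Y\to X$ to $T$ is proper (universally closed), surjective and has finite fibers; $M(X,Y)$ is the set of these. $S_*^M(X)$ is the simplicial set with $S_n^M(X)=M(\Delta_n,X)$ ($\Delta_n$ the standard topological $n$-simplex), with face and degeneracy maps $\alpha\mapsto\alpha\circ\mathrm{gr}(f)=\{(s,x):(f(s),x)\in\alpha\}$ for $f$ the standard coface and codegeneracy maps; it is a Kan complex. Elements of $S_0^M(X)$ are identified with nonempty finite subsets of $X$. The multivalued homotopy groups are $\pi_n^M(X,A)=\pi_n(S_*^M(X),A)$, the simplicial homotopy groups at the vertex $A$. *)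

theory Defs
  imports "HOL-Analysis.Analysis" "HOL-Homology.Homology"
begin

abbreviation simplex_top :: "nat \<Rightarrow> (nat \<Rightarrow> real) topology" where
  "simplex_top n \<equiv> subtopology (powertop_real UNIV) (standard_simplex n)"

text \<open>Continuous multivalued maps from a space S to X: subsets T of S x X such that
  the projection T -> S is proper (universally closed), surjective, with finite fibres.\<close>
definition mv_maps :: "'b topology \<Rightarrow> 'a topology \<Rightarrow> ('b \<times> 'a) set set" where
  "mv_maps S X = {T. T \<subseteq> topspace S \<times> topspace X
      \<and> proper_map (subtopology (prod_topology S X) T) S fst
      \<and> fst ` T = topspace S
      \<and> (\<forall>s \<in> topspace S. finite {x. (s, x) \<in> T})}"

definition mv_simplices :: "'a topology \<Rightarrow> nat \<Rightarrow> ((nat \<Rightarrow> real) \<times> 'a) set set" where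
  "mv_simplices X n = mv_maps (simplex_top n) X"

definition mv_precomp :: "nat \<Rightarrow> ((nat \<Rightarrow> real) \<Rightarrow> (nat \<Rightarrow> real)) \<Rightarrow> ((nat \<Rightarrow> real) \<times> 'a) set
    \<Rightarrow> ((nat \<Rightarrow> real) \<times> 'a) set" where
  "mv_precomp m f \<alpha> = {(s, x). s \<in> standard_simplex m \<and> (f s, x) \<in> \<alpha>}"

definition mv_face :: "nat \<Rightarrow> nat \<Rightarrow> ((nat \<Rightarrow> real) \<times> 'a) set \<Rightarrow> ((nat \<Rightarrow> real) \<times> 'a) set" where
  "mv_face n i \<alpha> = mv_precomp (n - 1) (simplical_face i) \<alpha>"

text \<open>The vertex A (a nonempty finite subset of X, i.e. an element of M(Delta_0,X))
  viewed as the totally degenerate n-simplex: Delta_n x A (= A o gr(const)).\<close>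
definition mv_const :: "nat \<Rightarrow> 'a set \<Rightarrow> ((nat \<Rightarrow> real) \<times> 'a) set" where
  "mv_const n A = standard_simplex n \<times> A"

text \<open>Simplicial homotopy groups of the Kan complex S^M_*(X) at the vertex A
  (combinatorial definition, valid for Kan complexes): n-simplices all of whose faces
  are the degenerate base point, modulo simplicial homotopy rel boundary.\<close>
definition mv_spheres :: "'a topology \<Rightarrow> 'a set \<Rightarrow> nat \<Rightarrow> ((nat \<Rightarrow> real) \<times> 'a) set set" where
  "mv_spheres X A n = {x \<in> mv_simplices X n. \<forall>i\<le>n. mv_face n i x = mv_const (n - 1) A}"

definition mv_homotopic :: "'a topology \<Rightarrow> 'a set \<Rightarrow> nat \<Rightarrow> ((nat \<Rightarrow> real) \<times> 'a) set
    \<Rightarrow> ((nat \<Rightarrow> real) \<times> 'a) set \<Rightarrow> bool" where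
  "mv_homotopic X A n x x' \<longleftrightarrow>
     (\<exists>y \<in> mv_simplices X (Suc n).
        mv_face (Suc n) n y = x \<and> mv_face (Suc n) (Suc n) y = x'
        \<and> (\<forall>i<n. mv_face (Suc n) i y = mv_const n A))"

definition mv_homotopy_group :: "'a topology \<Rightarrow> 'a set \<Rightarrow> nat \<Rightarrow> ((nat \<Rightarrow> real) \<times> 'a) set set set" where
  "mv_homotopy_group X A n =
     mv_spheres X A n // {(x, x'). x \<in> mv_spheres X A n \<and> x' \<in> mv_spheres X A n
                                  \<and> mv_homotopic X A n x x'}"

end

theory Submission
  imports Defs
begin

text \<open>For a compact Hausdorff space X, a multivalued map into X is just a closed relation
  with nonempty finite fibres. Given two spheres x and x', let \<sigma> : \<Delta>(n+1) \<rightarrow> \<Delta>(n) add the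
  coordinates n and n+1, and let the (n+1)-simplex y be x \<circ> \<sigma> on the half s(n) \<le> s(n+1)
  and x' \<circ> \<sigma> on the half s(n+1) \<le> s(n), taking both values on the wall s(n) = s(n+1);
  this is where multivaluedness is used. The union of the two closed pieces is closed, so y
  is a simplex. The faces d(n) y and d(n+1) y meet the wall only over the boundary of \<Delta>(n),
  where x and x' both equal A, so they are x and x'; the faces d(i) y with i < n factor
  through faces of x and x' and are constantly A. Hence any two spheres are homotopic.\<close>

lemma closedin_of_proper_map_fst:
  assumes "Hausdorff_space X" and "T \<subseteq> topspace S \<times> topspace X"
    and "proper_map (subtopology (prod_topology S X) T) S fst"
  shows "closedin (prod_topology S X) T"
proof -
  let ?T = "subtopology (prod_topology S X) T"
  have "continuous_map ?T X snd"
    by (simp add: continuous_map_from_subtopology continuous_map_snd)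
  then have "proper_map ?T (prod_topology S X) (\<lambda>p. (fst p, snd p))"
    using assms by (blast intro: proper_map_paired)
  then have "closedin (prod_topology S X) ((\<lambda>p. (fst p, snd p)) ` topspace ?T)"
    unfolding proper_map_def closed_map_def by blast
  then show ?thesis
    using assms(2) by (simp add: inf_absorb2 image_ident)
qed

lemma proper_map_fst_of_closedin:
  assumes "compact_space X" and "closedin (prod_topology S X) T"
  shows "proper_map (subtopology (prod_topology S X) T) S fst"
  unfolding proper_map_def
proof (intro conjI ballI)
  have "closed_map (subtopology (prod_topology S X) T) (prod_topology S X) id"
    using assms(2) closed_map_inclusion_eq closedin_subset by (metis inf.absorb_iff2)
  then show "closed_map (subtopology (prod_topology S X) T) S fst"
    using closed_map_compose closed_map_fst[OF assms(1)] by fastforce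
next
  fix s assume "s \<in> topspace S"
  then have "compactin (prod_topology S X) ({s} \<times> topspace X)"
    using assms(1) by (simp add: compactin_Times compact_space_def)
  then have "compactin (prod_topology S X) (T \<inter> {s} \<times> topspace X)"
    using assms(2) by (intro closed_Int_compactin)
  moreover have "T \<inter> {s} \<times> topspace X = {p \<in> topspace (subtopology (prod_topology S X) T). fst p = s}"
    using closedin_subset[OF assms(2)] by auto
  ultimately show "compactin (subtopology (prod_topology S X) T)
      {p \<in> topspace (subtopology (prod_topology S X) T). fst p = s}"
    by (force simp: compactin_subtopology)
qed

lemma closedin_continuous_map_le:
  assumes "continuous_map X euclideanreal f" and "continuous_map X euclideanreal g"
  shows "closedin X {x \<in> topspace X. f x \<le> g x}"
  using closedin_continuous_map_preimage[OF continuous_map_diff[OF assms(2,1)], of "{0..}"]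
  by simp

lemma mv_maps_compact_Hausdorff:
  assumes "compact_space X" and "Hausdorff_space X"
  shows "mv_maps S X = {T. closedin (prod_topology S X) T \<and> fst ` T = topspace S
      \<and> (\<forall>s \<in> topspace S. finite {x. (s, x) \<in> T})}"
proof -
  have "proper_map (subtopology (prod_topology S X) T) S fst \<longleftrightarrow> closedin (prod_topology S X) T"
    if "T \<subseteq> topspace S \<times> topspace X" for T
    using assms that closedin_of_proper_map_fst proper_map_fst_of_closedin by blast
  then show ?thesis
    unfolding mv_maps_def using closedin_subset[of "prod_topology S X"] by auto
qed

definition simplex_codegeneracy :: "nat \<Rightarrow> (nat \<Rightarrow> real) \<Rightarrow> nat \<Rightarrow> real" where
  "simplex_codegeneracy k s = (\<lambda>i. if i < k then s i else if i = k then s k + s (Suc k) else 0)"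

lemma simplex_codegeneracy_in_standard_simplex:
  assumes "s \<in> standard_simplex (Suc n)"
  shows "simplex_codegeneracy n s \<in> standard_simplex n"
proof -
  have s01: "\<And>i. 0 \<le> s i \<and> s i \<le> 1" and "(\<Sum>i\<le>Suc n. s i) = 1"
    and s0: "\<And>i. i > Suc n \<Longrightarrow> s i = 0"
    using assms by (auto simp: standard_simplex_def)
  then have "(\<Sum>i<n. s i) + (s n + s (Suc n)) = 1"
    by (simp add: lessThan_Suc_atMost[symmetric])
  moreover have "(\<Sum>i\<le>n. simplex_codegeneracy n s i) = (\<Sum>i<n. s i) + (s n + s (Suc n))"
    by (simp add: lessThan_Suc_atMost[symmetric] simplex_codegeneracy_def)
  moreover have "0 \<le> (\<Sum>i<n. s i)"
    using s01 by (simp add: sum_nonneg)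
  ultimately show ?thesis
    using s01 s0 by (auto simp: standard_simplex_def simplex_codegeneracy_def)
qed

lemma continuous_map_simplex_codegeneracy:
  "continuous_map (simplex_top (Suc n)) (simplex_top n) (simplex_codegeneracy n)"
proof -
  have "continuous_map (simplex_top (Suc n)) euclideanreal (\<lambda>s. simplex_codegeneracy n s i)" for i
    unfolding simplex_codegeneracy_def
    by (intro continuous_map_from_subtopology)
       (auto intro!: continuous_map_product_projection continuous_map_add)
  then show ?thesis
    by (auto simp: continuous_map_in_subtopology continuous_map_componentwise
        simplex_codegeneracy_in_standard_simplex)
qed

lemma simplex_codegeneracy_face_same:
  "t \<in> standard_simplex n \<Longrightarrow> simplex_codegeneracy n (simplical_face n t) = t"
  by (auto simp: simplex_codegeneracy_def simplical_face_def standard_simplex_def)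

lemma simplex_codegeneracy_face_Suc:
  "t \<in> standard_simplex n \<Longrightarrow> simplex_codegeneracy n (simplical_face (Suc n) t) = t"
  by (auto simp: simplex_codegeneracy_def simplical_face_def standard_simplex_def)

lemma simplex_codegeneracy_face_commute:
  "i \<le> m \<Longrightarrow>
    simplex_codegeneracy (Suc m) (simplical_face i t) = simplical_face i (simplex_codegeneracy m t)"
  by (auto simp: simplex_codegeneracy_def simplical_face_def fun_eq_iff)

lemma simplical_face_simplex_codegeneracy_last:
  assumes "t \<in> standard_simplex (Suc m)" and "t (Suc m) = 0"
  shows "simplical_face (Suc m) (simplex_codegeneracy m t) = t"
proof
  fix j
  consider "j < m" | "j = m" | "j = Suc m" | "j > Suc m"
    by linarith
  then show "simplical_face (Suc m) (simplex_codegeneracy m t) j = t j"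
    using assms by cases (auto simp: simplex_codegeneracy_def simplical_face_def standard_simplex_def)
qed

lemma closedin_prod_pullback:
  assumes "continuous_map S S' f" and "closedin (prod_topology S' X) T"
  shows "closedin (prod_topology S X) {p \<in> topspace (prod_topology S X). (f (fst p), snd p) \<in> T}"
  using assms by (intro closedin_continuous_map_preimage[OF _ assms(2)] continuous_map_pairedI
      continuous_map_compose[OF continuous_map_fst assms(1), unfolded o_def] continuous_map_snd)

lemma mv_simplices_subset: "x \<in> mv_simplices X n \<Longrightarrow> x \<subseteq> standard_simplex n \<times> topspace X"
  by (simp add: mv_simplices_def mv_maps_def)

lemma mv_face_Suc_iff:
  "(t, z) \<in> mv_face (Suc n) i y \<longleftrightarrow> t \<in> standard_simplex n \<and> (simplical_face i t, z) \<in> y"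
  by (simp add: mv_face_def mv_precomp_def)

lemma mv_spheres_face_fibre:
  assumes "x \<in> mv_spheres X A n" and "i \<le> n" and "u \<in> standard_simplex (n - 1)"
  shows "(simplical_face i u, z) \<in> x \<longleftrightarrow> z \<in> A"
proof -
  have "mv_face n i x = mv_const (n - 1) A"
    using assms by (simp add: mv_spheres_def)
  then have "(u, z) \<in> mv_face n i x \<longleftrightarrow> (u, z) \<in> mv_const (n - 1) A"
    by simp
  then show ?thesis
    using assms(3) by (simp add: mv_face_def mv_precomp_def mv_const_def)
qed

lemma mv_spheres_fibre_last_zero:
  assumes "x \<in> mv_spheres X A (Suc m)" and "t \<in> standard_simplex (Suc m)" and "t (Suc m) = 0"
  shows "(t, z) \<in> x \<longleftrightarrow> z \<in> A"
  using mv_spheres_face_fibre[of x X A "Suc m" "Suc m" "simplex_codegeneracy m t" z] assms(1)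
    simplex_codegeneracy_in_standard_simplex[OF assms(2)]
    simplical_face_simplex_codegeneracy_last[OF assms(2,3)]
  by simp

lemma mv_const_in_mv_spheres:
  assumes "compact_space X" and "Hausdorff_space X"
    and "A \<subseteq> topspace X" and "finite A" and "A \<noteq> {}" and "0 < n"
  shows "mv_const n A \<in> mv_spheres X A n"
proof -
  have "closedin X A"
    using assms(2-4) Hausdorff_imp_t1_space t1_space_closedin_finite by blast
  then have "closedin (prod_topology (simplex_top n) X) (mv_const n A)"
    by (simp add: mv_const_def closedin_prod_Times_iff)
  moreover have "fst ` mv_const n A = standard_simplex n"
    using assms(5) by (auto simp: mv_const_def)
  moreover have "finite {z. (s, z) \<in> mv_const n A}" for s
    by (rule finite_subset[OF _ assms(4)]) (auto simp: mv_const_def)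
  ultimately have "mv_const n A \<in> mv_simplices X n"
    by (simp add: mv_simplices_def mv_maps_compact_Hausdorff[OF assms(1,2)])
  moreover have "mv_face n i (mv_const n A) = mv_const (n - 1) A" if "i \<le> n" for i
    using simplical_face_in_standard_simplex[of n i] that assms(6)
    by (auto simp: mv_face_def mv_precomp_def mv_const_def)
  ultimately show ?thesis
    by (simp add: mv_spheres_def)
qed

definition mv_sphere_homotopy :: "nat \<Rightarrow> ((nat \<Rightarrow> real) \<times> 'a) set \<Rightarrow> ((nat \<Rightarrow> real) \<times> 'a) set
    \<Rightarrow> ((nat \<Rightarrow> real) \<times> 'a) set" where
  "mv_sphere_homotopy n x x' = {(s, z). s \<in> standard_simplex (Suc n) \<and>
      (s n \<le> s (Suc n) \<and> (simplex_codegeneracy n s, z) \<in> x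
       \<or> s (Suc n) \<le> s n \<and> (simplex_codegeneracy n s, z) \<in> x')}"

lemma mv_sphere_homotopy_in_mv_simplices:
  assumes "compact_space X" and "Hausdorff_space X"
    and x: "x \<in> mv_simplices X n" and x': "x' \<in> mv_simplices X n"
  shows "mv_sphere_homotopy n x x' \<in> mv_simplices X (Suc n)"
proof -
  let ?y = "mv_sphere_homotopy n x x'"
  let ?P = "prod_topology (simplex_top (Suc n)) X"
  let ?\<sigma> = "simplex_codegeneracy n"
  note mv_simplices = mv_simplices_def mv_maps_compact_Hausdorff[OF assms(1,2)]
  have simplex: "closedin (prod_topology (simplex_top n) X) w" "fst ` w = standard_simplex n"
    "\<And>t. t \<in> standard_simplex n \<Longrightarrow> finite {z. (t, z) \<in> w}"
    if "w \<in> mv_simplices X n" for w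
    using that by (simp_all add: mv_simplices)
  have coord: "continuous_map ?P euclideanreal (\<lambda>p. fst p k)" for k
    by (intro continuous_map_compose[OF continuous_map_fst, unfolded o_def]
        continuous_map_from_subtopology continuous_map_product_projection) simp
  have closed_le: "closedin ?P {p \<in> topspace ?P. fst p j \<le> fst p k}" for j k
    by (intro closedin_continuous_map_le coord)
  have closed_pullback: "closedin ?P {p \<in> topspace ?P. (?\<sigma> (fst p), snd p) \<in> w}"
    if "w \<in> mv_simplices X n" for w
    by (intro closedin_prod_pullback[OF continuous_map_simplex_codegeneracy] simplex(1)[OF that])
  have "?y = {p \<in> topspace ?P. fst p n \<le> fst p (Suc n)} \<inter> {p \<in> topspace ?P. (?\<sigma> (fst p), snd p) \<in> x}
      \<union> {p \<in> topspace ?P. fst p (Suc n) \<le> fst p n} \<inter> {p \<in> topspace ?P. (?\<sigma> (fst p), snd p) \<in> x'}"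
    using mv_simplices_subset[OF x] mv_simplices_subset[OF x']
    unfolding mv_sphere_homotopy_def by fastforce
  then have "closedin ?P ?y"
    by (simp only:) (intro closedin_Un closedin_Int closed_le closed_pullback x x')
  moreover have "fst ` ?y = standard_simplex (Suc n)"
  proof (intro subset_antisym subsetI)
    fix s assume s: "s \<in> standard_simplex (Suc n)"
    then have "?\<sigma> s \<in> fst ` x" "?\<sigma> s \<in> fst ` x'"
      using simplex(2)[OF x] simplex(2)[OF x'] simplex_codegeneracy_in_standard_simplex by auto
    then obtain z z' where "(?\<sigma> s, z) \<in> x" "(?\<sigma> s, z') \<in> x'"
      by force
    then have "(s, z) \<in> ?y \<or> (s, z') \<in> ?y"
      using s by (auto simp: mv_sphere_homotopy_def)
    then show "s \<in> fst ` ?y"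
      by force
  qed (auto simp: mv_sphere_homotopy_def)
  moreover have "finite {z. (s, z) \<in> ?y}" if "s \<in> standard_simplex (Suc n)" for s
  proof -
    have "{z. (s, z) \<in> ?y} \<subseteq> {z. (?\<sigma> s, z) \<in> x} \<union> {z. (?\<sigma> s, z) \<in> x'}"
      by (auto simp: mv_sphere_homotopy_def)
    moreover have "?\<sigma> s \<in> standard_simplex n"
      using that by (rule simplex_codegeneracy_in_standard_simplex)
    ultimately show ?thesis
      using simplex(3)[OF x] simplex(3)[OF x'] by (meson finite_UnI finite_subset)
  qed
  ultimately show ?thesis
    by (simp add: mv_simplices)
qed

lemma mv_face_mv_sphere_homotopy_same:
  assumes x: "x \<in> mv_spheres X A n" and x': "x' \<in> mv_spheres X A n" and "0 < n"
  shows "mv_face (Suc n) n (mv_sphere_homotopy n x x') = x"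
proof -
  obtain m where m: "n = Suc m"
    using assms(3) gr0_conv_Suc by blast
  have "(t, z) \<in> mv_face (Suc n) n (mv_sphere_homotopy n x x') \<longleftrightarrow> (t, z) \<in> x" for t z
  proof (cases "t \<in> standard_simplex n")
    case True
    have t_n: "0 \<le> t n"
      using True by (simp add: standard_simplex_def)
    moreover have "simplical_face n t \<in> standard_simplex (Suc n)"
      using True simplical_face_in_standard_simplex[of "Suc n" n t] by simp
    moreover have "simplical_face n t n = 0" "simplical_face n t (Suc n) = t n"
      by (simp_all add: simplical_face_def)
    ultimately have "(simplical_face n t, z) \<in> mv_sphere_homotopy n x x'
        \<longleftrightarrow> (t, z) \<in> x \<or> t n \<le> 0 \<and> (t, z) \<in> x'"
      using simplex_codegeneracy_face_same[OF True] by (auto simp: mv_sphere_homotopy_def)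
    moreover have "t n = 0 \<Longrightarrow> (t, z) \<in> x' \<longleftrightarrow> (t, z) \<in> x"
      using mv_spheres_fibre_last_zero[of _ X A m t z] x x' True m by simp
    ultimately show ?thesis
      using True t_n by (auto simp: mv_face_Suc_iff)
  next
    case False
    then show ?thesis
      using x mv_simplices_subset[of x X n] by (auto simp: mv_face_Suc_iff mv_spheres_def)
  qed
  then show ?thesis
    by auto
qed

lemma mv_face_mv_sphere_homotopy_Suc:
  assumes x: "x \<in> mv_spheres X A n" and x': "x' \<in> mv_spheres X A n" and "0 < n"
  shows "mv_face (Suc n) (Suc n) (mv_sphere_homotopy n x x') = x'"
proof -
  obtain m where m: "n = Suc m"
    using assms(3) gr0_conv_Suc by blast
  have "(t, z) \<in> mv_face (Suc n) (Suc n) (mv_sphere_homotopy n x x') \<longleftrightarrow> (t, z) \<in> x'" for t z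
  proof (cases "t \<in> standard_simplex n")
    case True
    have t_n: "0 \<le> t n"
      using True by (simp add: standard_simplex_def)
    moreover have "simplical_face (Suc n) t \<in> standard_simplex (Suc n)"
      using True simplical_face_in_standard_simplex[of "Suc n" "Suc n" t] by simp
    moreover have "simplical_face (Suc n) t n = t n" "simplical_face (Suc n) t (Suc n) = 0"
      by (simp_all add: simplical_face_def)
    ultimately have "(simplical_face (Suc n) t, z) \<in> mv_sphere_homotopy n x x'
        \<longleftrightarrow> (t, z) \<in> x' \<or> t n \<le> 0 \<and> (t, z) \<in> x"
      using simplex_codegeneracy_face_Suc[OF True] by (auto simp: mv_sphere_homotopy_def)
    moreover have "t n = 0 \<Longrightarrow> (t, z) \<in> x' \<longleftrightarrow> (t, z) \<in> x"
      using mv_spheres_fibre_last_zero[of _ X A m t z] x x' True m by simp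
    ultimately show ?thesis
      using True t_n by (auto simp: mv_face_Suc_iff)
  next
    case False
    then show ?thesis
      using x' mv_simplices_subset[of x' X n] by (auto simp: mv_face_Suc_iff mv_spheres_def)
  qed
  then show ?thesis
    by auto
qed

lemma mv_face_mv_sphere_homotopy_less:
  assumes x: "x \<in> mv_spheres X A n" and x': "x' \<in> mv_spheres X A n" and "i < n"
  shows "mv_face (Suc n) i (mv_sphere_homotopy n x x') = mv_const n A"
proof -
  obtain m where m: "n = Suc m"
    using assms(3) less_imp_Suc_add by blast
  have "(t, z) \<in> mv_face (Suc n) i (mv_sphere_homotopy n x x') \<longleftrightarrow> (t, z) \<in> mv_const n A" for t z
  proof (cases "t \<in> standard_simplex n")
    case True
    have "simplex_codegeneracy n (simplical_face i t) = simplical_face i (simplex_codegeneracy m t)"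
      using assms(3) m simplex_codegeneracy_face_commute by simp
    moreover have "simplex_codegeneracy m t \<in> standard_simplex (n - 1)"
      using True m simplex_codegeneracy_in_standard_simplex by simp
    ultimately have "(simplex_codegeneracy n (simplical_face i t), z) \<in> w \<longleftrightarrow> z \<in> A"
      if "w \<in> mv_spheres X A n" for w
      using mv_spheres_face_fibre[OF that] assms(3) by simp
    moreover have "simplical_face i t \<in> standard_simplex (Suc n)"
      using True assms(3) simplical_face_in_standard_simplex[of "Suc n" i t] by simp
    ultimately have "(simplical_face i t, z) \<in> mv_sphere_homotopy n x x' \<longleftrightarrow> z \<in> A"
      using x x' by (auto simp: mv_sphere_homotopy_def)
    then show ?thesis
      using True by (simp add: mv_face_Suc_iff mv_const_def)
  next
    case False
    then show ?thesis
      by (simp add: mv_face_Suc_iff mv_const_def)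
  qed
  then show ?thesis
    by auto
qed

lemma mv_homotopic_mv_spheres:
  assumes "compact_space X" and "Hausdorff_space X" and "0 < n"
    and "x \<in> mv_spheres X A n" and "x' \<in> mv_spheres X A n"
  shows "mv_homotopic X A n x x'"
proof -
  have "mv_sphere_homotopy n x x' \<in> mv_simplices X (Suc n)"
    using assms by (intro mv_sphere_homotopy_in_mv_simplices) (simp_all add: mv_spheres_def)
  then show ?thesis
    unfolding mv_homotopic_def
    using mv_face_mv_sphere_homotopy_same[OF assms(4,5,3)] mv_face_mv_sphere_homotopy_Suc[OF assms(4,5,3)]
      mv_face_mv_sphere_homotopy_less[OF assms(4,5)]
    by blast
qed

theorem mainTheorem11:
  fixes X :: "'a topology" and A :: "'a set" and n :: nat
  assumes "compact_space X" and "Hausdorff_space X"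
    and "A \<subseteq> topspace X" and "finite A" and "A \<noteq> {}"
    and "n > 0"
  shows "\<exists>c. mv_homotopy_group X A n = {c}"
proof -
  let ?S = "mv_spheres X A n"
  have "{(x, x'). x \<in> ?S \<and> x' \<in> ?S \<and> mv_homotopic X A n x x'} = ?S \<times> ?S"
    using mv_homotopic_mv_spheres[OF assms(1,2,6)] by auto
  moreover have "?S \<noteq> {}"
    using mv_const_in_mv_spheres[OF assms] by blast
  ultimately have "mv_homotopy_group X A n = {?S}"
    by (auto simp: mv_homotopy_group_def quotient_def)
  then show ?thesis
    by blast
qed

end
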